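(* Let $\mathscr X\subset\mathbb R^d$ be compact with $\mathrm{vol}(\mathscr X)>0$, and let $\|\cdot\|$ be any norm on $\mathbb R^d$. Let $\mathbf x_1,\mathbf x_2,\ldots$ be any sequence of pairwise distinct points of $\mathscr X$, and let $\mathbf X_n=\{\mathbf x_1,\ldots,\mathbf x_n\}$. Then $$\limsup_{n\to\infty}\mathsf{MR}(\mathbf X_n)\ge 2.$$ In particular, the uniformity constant satisfies $\mathsf{MR}(\mathbf X_\infty)\ge 2$ for every such sequence $\mathbf X_\infty=\{\mathbf x_1,\mathbf x_2,\ldots\}\subset\mathscr X$.
   Context: For a design (finite set of distinct points) $\mathbf X_n=\{\mathbf x_1,\ldots,\mathbf x_n\}\subset\mathscr X$: - the fill distance is $\mathsf{CR}(\mathbf X_n)=\mathsf{CR}_{\mathscr X}(\mathbf X_n)=\sup_{\mathbf x\in\mathscr X}\min_{\mathbf x_i\in\mathbf X_n}\|\mathbf x-\mathbf x_i\|$; - the separation radius is $\mathsf{SR}(\mathbf X_n)=\tfrac12\min_{\mathbf x_i\neq\mathbf x_j\in\mathbf X_n}\|\mathbf x_i-\mathbf x_j\|$ for $n\ge2$; - the mesh-ratio is $\mathsf{MR}(\mathbf X_n)=\mathsf{CR}(\mathbf X_n)/\mathsf{SR}(\mathbf X_n)$ for $n\ge 2$. The uniformity constant of the sequence $\mathbf X_\infty$ (equivalently of the nested designs $\{\mathbf X_n\}$) is $\mathsf{MR}(\mathbf X_\infty)=\sup_{n\ge2}\mathsf{MR}(\mathbf X_n)$ (possibly $+\infty$).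 *)

theory Defs
  imports "HOL-Analysis.Analysis"
begin

text \<open>An arbitrary norm on a real vector space (not necessarily the type-class norm).\<close>
definition is_norm :: "('a::real_vector \<Rightarrow> real) \<Rightarrow> bool" where
  "is_norm N \<longleftrightarrow>
     (\<forall>x. 0 \<le> N x) \<and> (\<forall>x. N x = 0 \<longleftrightarrow> x = 0) \<and>
     (\<forall>c x. N (c *\<^sub>R x) = \<bar>c\<bar> * N x) \<and>
     (\<forall>x y. N (x + y) \<le> N x + N y)"

definition fill_dist :: "('a::real_vector \<Rightarrow> real) \<Rightarrow> 'a set \<Rightarrow> 'a set \<Rightarrow> real" where
  "fill_dist N X P = (SUP x\<in>X. Min ((\<lambda>p. N (x - p)) ` P))"

definition sep_radius :: "('a::real_vector \<Rightarrow> real) \<Rightarrow> 'a set \<Rightarrow> real" where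
  "sep_radius N P = Min {N (p - q) | p q. p \<in> P \<and> q \<in> P \<and> p \<noteq> q} / 2"

definition mesh_ratio :: "('a::real_vector \<Rightarrow> real) \<Rightarrow> 'a set \<Rightarrow> 'a set \<Rightarrow> real" where
  "mesh_ratio N X P = fill_dist N X P / sep_radius N P"

end

theory Submission
  imports Defs
begin

text \<open>
  Write \<open>h\<^sub>n\<close> and \<open>s\<^sub>n\<close> for the fill distance and the separation radius of the
  first \<open>n\<close> points. The new point \<open>x\<^sub>n\<close> lies within \<open>h\<^sub>n\<close> of one of the earlier
  points, so \<open>s\<^sub>n\<^sub>+\<^sub>1 \<le> h\<^sub>n / 2\<close> and hence \<open>h\<^sub>n\<^sub>+\<^sub>1 \<le> MR\<^sub>n\<^sub>+\<^sub>1 h\<^sub>n / 2\<close>.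
  If the mesh ratio were eventually below some \<open>r < 2\<close>, the fill distance would
  therefore decay geometrically. But \<open>X\<close> is covered by \<open>n\<close> balls of radius
  proportional to \<open>h\<^sub>n\<close>, so \<open>vol X \<le> const \<cdot> n h\<^sub>n\<^sup>d \<rightarrow> 0\<close>, contradicting \<open>vol X > 0\<close>.
\<close>

subsection \<open>Norms on a finite-dimensional space\<close>

lemma is_norm_minus_commute:
  assumes "is_norm N"
  shows "N (a - b) = N (b - a)"
  using assms unfolding is_norm_def
  by (metis abs_minus_cancel abs_one minus_diff_eq mult_1 scaleR_minus1_left)

lemma is_norm_reverse_triangle:
  assumes "is_norm N"
  shows "\<bar>N a - N b\<bar> \<le> N (a - b)"
proof -
  have "N a \<le> N b + N (a - b)" "N b \<le> N a + N (b - a)"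
    using assms unfolding is_norm_def by (metis add.commute diff_add_cancel)+
  then show ?thesis using is_norm_minus_commute[OF assms, of a b] by linarith
qed

lemma is_norm_zero:
  assumes "is_norm N"
  shows "N 0 = 0"
  using assms unfolding is_norm_def by blast

lemma is_norm_sum_le:
  assumes "is_norm N"
  shows "N (sum f I) \<le> (\<Sum>i\<in>I. N (f i))"
proof (induction I rule: infinite_finite_induct)
  case (insert i I)
  have "N (sum f (insert i I)) \<le> N (f i) + N (sum f I)"
    using insert.hyps assms by (simp add: is_norm_def)
  also have "\<dots> \<le> (\<Sum>i\<in>insert i I. N (f i))"
    using insert.hyps insert.IH by simp
  finally show ?case .
qed (simp_all add: is_norm_zero[OF assms])

lemma is_norm_le_mult_norm:
  fixes N :: "'a::euclidean_space \<Rightarrow> real"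
  assumes "is_norm N"
  obtains C where "C \<ge> 0" "\<And>z. N z \<le> C * norm z"
proof
  define C where "C = (\<Sum>b\<in>Basis. N b)"
  show "C \<ge> 0"
    unfolding C_def using assms by (simp add: is_norm_def sum_nonneg)
  fix z :: 'a
  have "N z = N (\<Sum>b\<in>Basis. (z \<bullet> b) *\<^sub>R b)"
    by (simp add: euclidean_representation)
  also have "\<dots> \<le> (\<Sum>b\<in>Basis. \<bar>z \<bullet> b\<bar> * N b)"
    using assms by (intro order_trans[OF is_norm_sum_le[OF assms]]) (simp add: is_norm_def)
  also have "\<dots> \<le> (\<Sum>b\<in>Basis. norm z * N b)"
    using assms Basis_le_norm by (intro sum_mono mult_right_mono) (auto simp: is_norm_def)
  also have "\<dots> = C * norm z"
    by (simp add: C_def sum_distrib_left mult.commute)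
  finally show "N z \<le> C * norm z" .
qed

lemma is_norm_continuous_on:
  fixes N :: "'a::euclidean_space \<Rightarrow> real"
  assumes "is_norm N"
  shows "continuous_on S N"
proof -
  obtain C where "C \<ge> 0" "\<And>z. N z \<le> C * norm z"
    using is_norm_le_mult_norm[OF assms] by blast
  then have "C-lipschitz_on S N"
    using is_norm_reverse_triangle[OF assms]
    by (intro lipschitz_onI) (auto simp: dist_norm intro: order_trans)
  then show ?thesis
    by (rule lipschitz_on_continuous_on)
qed

text \<open>The constant \<open>m\<close> is the minimum of \<open>N\<close> on the compact unit sphere.\<close>
lemma is_norm_ge_mult_norm:
  fixes N :: "'a::euclidean_space \<Rightarrow> real"
  assumes "is_norm N"
  obtains m where "m > 0" "\<And>z. m * norm z \<le> N z"
proof -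
  obtain u where u: "u \<in> sphere 0 1" and u_min: "\<And>z. z \<in> sphere 0 1 \<Longrightarrow> N u \<le> N z"
    using continuous_attains_inf[OF compact_sphere _ is_norm_continuous_on[OF assms], of 0 1]
    by auto
  have "N u > 0"
    using u assms unfolding is_norm_def by (metis norm_zero order_le_less mem_sphere_0 zero_neq_one)
  moreover have "N u * norm z \<le> N z" for z
  proof (cases "z = 0")
    case False
    have "N u \<le> N ((1 / norm z) *\<^sub>R z)"
      using u_min False by simp
    also have "\<dots> = N z / norm z"
      using assms by (simp add: is_norm_def)
    finally show ?thesis
      using False by (simp add: field_simps)
  qed (use assms in \<open>simp add: is_norm_def\<close>)
  ultimately show ?thesis
    using that by blast
qed

subsection \<open>Fill distance and separation radius\<close>

context
  fixes N :: "'a::euclidean_space \<Rightarrow> real" and X P :: "'a set"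
  assumes norm_N: "is_norm N" and bounded_X: "bounded X"
    and finite_P: "finite P" and P_ne: "P \<noteq> {}"
begin

lemma bdd_above_dist_to_design: "bdd_above ((\<lambda>y. Min ((\<lambda>p. N (y - p)) ` P)) ` X)"
proof -
  obtain p0 where p0: "p0 \<in> P"
    using P_ne by blast
  obtain C where "C \<ge> 0" and C: "\<And>z. N z \<le> C * norm z"
    using is_norm_le_mult_norm[OF norm_N] by blast
  obtain B where B: "\<And>y. y \<in> X \<Longrightarrow> norm y \<le> B"
    using bounded_X bounded_iff by blast
  have "Min ((\<lambda>p. N (y - p)) ` P) \<le> C * (B + norm p0)" if "y \<in> X" for y
  proof -
    have "Min ((\<lambda>p. N (y - p)) ` P) \<le> N (y - p0)"
      using finite_P p0 by simp
    also have "\<dots> \<le> C * norm (y - p0)"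
      by (rule C)
    also have "\<dots> \<le> C * (B + norm p0)"
      using B[OF that] norm_triangle_ineq4[of y p0] \<open>C \<ge> 0\<close> by (intro mult_left_mono) auto
    finally show ?thesis .
  qed
  then show ?thesis
    by (intro bdd_aboveI2)
qed

lemma fill_dist_nearest_point:
  assumes "y \<in> X"
  obtains p where "p \<in> P" "N (y - p) \<le> fill_dist N X P"
proof -
  have "Min ((\<lambda>p. N (y - p)) ` P) \<le> fill_dist N X P"
    unfolding fill_dist_def using assms by (intro cSUP_upper bdd_above_dist_to_design)
  moreover have "Min ((\<lambda>p. N (y - p)) ` P) \<in> (\<lambda>p. N (y - p)) ` P"
    using finite_P P_ne by (intro Min_in) auto
  ultimately show ?thesis
    using that by auto
qed

lemma fill_dist_nonneg:
  assumes "y \<in> X"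
  shows "0 \<le> fill_dist N X P"
  using fill_dist_nearest_point[OF assms] norm_N unfolding is_norm_def by (meson order_trans)

lemma emeasure_le_card_fill_dist_power:
  assumes "m > 0" and m: "\<And>z. m * norm z \<le> N z"
  shows "emeasure lborel X
    \<le> ennreal (card P * (unit_ball_vol DIM('a) * (fill_dist N X P / m) ^ DIM('a)))"
proof (cases "X = {}")
  case False
  define r where "r = fill_dist N X P / m"
  have "r \<ge> 0"
    unfolding r_def using False fill_dist_nonneg \<open>m > 0\<close> by auto
  have "X \<subseteq> (\<Union>p\<in>P. cball p r)"
  proof
    fix y assume "y \<in> X"
    then obtain p where "p \<in> P" "N (y - p) \<le> fill_dist N X P"
      by (rule fill_dist_nearest_point)
    then have "dist p y \<le> r"
      using m[of "y - p"] \<open>m > 0\<close> by (simp add: r_def dist_norm norm_minus_commute field_simps)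
    then show "y \<in> (\<Union>p\<in>P. cball p r)"
      using \<open>p \<in> P\<close> by auto
  qed
  then have "emeasure lborel X \<le> emeasure lborel (\<Union>p\<in>P. cball p r)"
    using finite_P by (intro emeasure_mono) (auto intro!: borel_closed)
  also have "\<dots> \<le> (\<Sum>p\<in>P. emeasure lborel (cball p r))"
    using finite_P by (intro emeasure_subadditive_finite) auto
  also have "\<dots> = ennreal (card P * (unit_ball_vol DIM('a) * r ^ DIM('a)))"
    using \<open>r \<ge> 0\<close> by (simp add: emeasure_cball ennreal_of_nat_eq_real_of_nat ennreal_mult')
  finally show ?thesis
    unfolding r_def .
qed simp

end

lemma finite_pairwise_dists:
  assumes "finite P"
  shows "finite {N (p - q) | p q. p \<in> P \<and> q \<in> P \<and> p \<noteq> q}"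
proof -
  have "{N (p - q) | p q. p \<in> P \<and> q \<in> P \<and> p \<noteq> q} \<subseteq> (\<lambda>(p, q). N (p - q)) ` (P \<times> P)"
    by auto
  then show ?thesis
    using assms by (meson finite_SigmaI finite_imageI finite_subset)
qed

lemma sep_radius_le:
  assumes "finite P" "p \<in> P" "q \<in> P" "p \<noteq> q"
  shows "sep_radius N P \<le> N (p - q) / 2"
  unfolding sep_radius_def using assms finite_pairwise_dists[of P N]
  by (intro divide_right_mono Min_le) auto

lemma sep_radius_pos:
  assumes "is_norm N" "finite P" "p \<in> P" "q \<in> P" "p \<noteq> q"
  shows "sep_radius N P > 0"
proof -
  let ?D = "{N (p - q) | p q. p \<in> P \<and> q \<in> P \<and> p \<noteq> q}"
  have "finite ?D"
    using assms(2) by (rule finite_pairwise_dists)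
  moreover have "?D \<noteq> {}"
    using assms by blast
  moreover have "\<forall>d\<in>?D. d > 0"
    using assms(1) unfolding is_norm_def by (force simp: order_le_less)
  ultimately show ?thesis
    unfolding sep_radius_def by simp
qed

lemma fill_dist_insert_le_mesh_ratio:
  fixes N :: "'a::euclidean_space \<Rightarrow> real"
  assumes "is_norm N" "bounded X" "finite P" "P \<noteq> {}" "y \<in> X" "y \<notin> P"
  shows "fill_dist N X (insert y P) \<le> mesh_ratio N X (insert y P) / 2 * fill_dist N X P"
proof -
  let ?P' = "insert y P"
  obtain p where p: "p \<in> P" "N (y - p) \<le> fill_dist N X P"
    using fill_dist_nearest_point[OF assms(1-5)] .
  have "p \<noteq> y"
    using p(1) assms(6) by blast
  then have s_pos: "sep_radius N ?P' > 0"
    using assms(1,3) p(1) by (intro sep_radius_pos[of N ?P' y p]) auto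
  have s_le: "sep_radius N ?P' \<le> fill_dist N X P / 2"
    using sep_radius_le[of ?P' y p N] assms(3) p \<open>p \<noteq> y\<close> by auto
  have "0 \<le> fill_dist N X ?P'"
    using assms by (intro fill_dist_nonneg) auto
  then have "0 \<le> mesh_ratio N X ?P'"
    unfolding mesh_ratio_def using s_pos by simp
  then have "mesh_ratio N X ?P' * sep_radius N ?P' \<le> mesh_ratio N X ?P' * (fill_dist N X P / 2)"
    by (intro mult_left_mono s_le)
  then show ?thesis
    using s_pos by (simp add: mesh_ratio_def)
qed

lemma fill_dist_lessThan_Suc_le:
  fixes N :: "'a::euclidean_space \<Rightarrow> real" and x :: "nat \<Rightarrow> 'a"
  assumes "is_norm N" "bounded X" "inj x" "range x \<subseteq> X" "n \<ge> 1"
  shows "fill_dist N X (x ` {..<Suc n})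
    \<le> mesh_ratio N X (x ` {..<Suc n}) / 2 * fill_dist N X (x ` {..<n})"
proof -
  have "x ` {..<n} \<noteq> {}" "x n \<in> X" "x n \<notin> x ` {..<n}"
    using assms(3-5) by (auto simp: lessThan_empty_iff inj_image_mem_iff)
  then show ?thesis
    using fill_dist_insert_le_mesh_ratio[OF assms(1,2)] by (simp add: lessThan_Suc)
qed

lemma fill_dist_decay_if_mesh_ratio_less:
  fixes N :: "'a::euclidean_space \<Rightarrow> real" and x :: "nat \<Rightarrow> 'a"
  assumes "is_norm N" "bounded X" "inj x" "range x \<subseteq> X"
    and "eventually (\<lambda>n. mesh_ratio N X (x ` {..<n}) < r) sequentially"
  shows "eventually (\<lambda>n. 0 \<le> fill_dist N X (x ` {..<n})
    \<and> fill_dist N X (x ` {..<Suc n}) \<le> r / 2 * fill_dist N X (x ` {..<n})) sequentially"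
  using eventually_ge_at_top[of 1] eventually_sequentially_Suc[THEN iffD2, OF assms(5)]
proof eventually_elim
  case (elim n)
  have "x 0 \<in> X" "x ` {..<n} \<noteq> {}"
    using assms(4) elim(1) by (auto simp: lessThan_empty_iff)
  then have "0 \<le> fill_dist N X (x ` {..<n})"
    using assms(1,2) by (intro fill_dist_nonneg) auto
  moreover have "mesh_ratio N X (x ` {..<Suc n}) / 2 * fill_dist N X (x ` {..<n})
      \<le> r / 2 * fill_dist N X (x ` {..<n})"
    using elim(2) calculation by (intro mult_right_mono) auto
  ultimately show ?case
    using fill_dist_lessThan_Suc_le[OF assms(1-4) elim(1)] by linarith
qed

lemma emeasure_not_fill_dist_times_power_tendsto_0:
  fixes N :: "'a::euclidean_space \<Rightarrow> real" and x :: "nat \<Rightarrow> 'a"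
  assumes "is_norm N" "bounded X" "emeasure lborel X > 0" "range x \<subseteq> X"
  shows "\<not> (\<lambda>n. real n * fill_dist N X (x ` {..<n}) ^ DIM('a)) \<longlonglongrightarrow> 0"
proof
  define h where "h n = fill_dist N X (x ` {..<n})" for n
  assume "(\<lambda>n. real n * h n ^ DIM('a)) \<longlonglongrightarrow> 0"
  obtain m where "m > 0" and m: "\<And>z. m * norm z \<le> N z"
    using is_norm_ge_mult_norm[OF assms(1)] by blast
  define c where "c = unit_ball_vol DIM('a) / m ^ DIM('a)"
  have "(\<lambda>n. ennreal (c * (real n * h n ^ DIM('a)))) \<longlonglongrightarrow> ennreal (c * 0)"
    by (intro tendsto_ennrealI tendsto_mult tendsto_const) fact
  then have "eventually (\<lambda>n. ennreal (c * (real n * h n ^ DIM('a))) < emeasure lborel X) sequentially"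
    using assms(3) by (intro order_tendstoD) simp_all
  moreover have "eventually (\<lambda>n. emeasure lborel X \<le> ennreal (c * (real n * h n ^ DIM('a)))) sequentially"
    using eventually_ge_at_top[of 1]
  proof eventually_elim
    case (elim n)
    have "x 0 \<in> X" "x ` {..<n} \<noteq> {}"
      using assms(4) elim by (auto simp: lessThan_empty_iff)
    then have "0 \<le> unit_ball_vol DIM('a) * (h n / m) ^ DIM('a)"
      unfolding h_def using assms(1,2) \<open>m > 0\<close> by (simp add: fill_dist_nonneg)
    then have "card (x ` {..<n}) * (unit_ball_vol DIM('a) * (h n / m) ^ DIM('a))
        \<le> real n * (unit_ball_vol DIM('a) * (h n / m) ^ DIM('a))"
      by (intro mult_right_mono) (auto intro: order_trans[OF card_image_le])
    also have "\<dots> = c * (real n * h n ^ DIM('a))"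
      by (simp add: c_def power_divide)
    finally show ?case
      using emeasure_le_card_fill_dist_power[OF assms(1,2) _ \<open>x ` {..<n} \<noteq> {}\<close> \<open>m > 0\<close> m]
      unfolding h_def by (auto intro: order_trans ennreal_leI)
  qed
  ultimately have "eventually (\<lambda>_. False) sequentially"
    by eventually_elim simp
  then show False
    by simp
qed

lemma geometric_decay_times_power_tendsto_0:
  fixes h :: "nat \<Rightarrow> real"
  assumes "0 < \<rho>" "\<rho> < 1" "k > 0"
    and "eventually (\<lambda>n. 0 \<le> h n \<and> h (Suc n) \<le> \<rho> * h n) sequentially"
  shows "(\<lambda>n. real n * h n ^ k) \<longlonglongrightarrow> 0"
proof -
  obtain K where K: "\<And>n. n \<ge> K \<Longrightarrow> 0 \<le> h n \<and> h (Suc n) \<le> \<rho> * h n"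
    using assms(4) unfolding eventually_sequentially by blast
  have geometric: "h n \<le> h K * \<rho> ^ (n - K)" if "n \<ge> K" for n
    using that
  proof (induction n rule: dec_induct)
    case (step n)
    have "h (Suc n) \<le> \<rho> * h n"
      using K step.hyps(1) by blast
    also have "\<dots> \<le> \<rho> * (h K * \<rho> ^ (n - K))"
      using step.IH assms(1) by (intro mult_left_mono) auto
    also have "\<dots> = h K * \<rho> ^ (Suc n - K)"
      using step.hyps(1) by (simp add: Suc_diff_le)
    finally show ?case .
  qed simp
  define A where "A = (h K / \<rho> ^ K) ^ k"
  have bound: "norm (real n * h n ^ k) \<le> A * (real n * (\<rho> ^ k) ^ n)" if "n \<ge> K" for n
  proof -
    have "h n \<le> h K / \<rho> ^ K * \<rho> ^ n"
      using geometric[OF that] that assms(1) by (simp add: power_diff field_simps)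
    then have "h n ^ k \<le> (h K / \<rho> ^ K * \<rho> ^ n) ^ k"
      using K[OF that] by (intro power_mono) auto
    also have "\<dots> = A * (\<rho> ^ n) ^ k"
      unfolding A_def by (rule power_mult_distrib)
    also have "\<dots> = A * (\<rho> ^ k) ^ n"
      by (simp add: power_mult[symmetric] mult.commute)
    finally have "real n * h n ^ k \<le> real n * (A * (\<rho> ^ k) ^ n)"
      by (rule mult_left_mono) simp
    then show ?thesis
      using K[OF that] by (simp add: mult_ac)
  qed
  then have "eventually (\<lambda>n. norm (real n * h n ^ k) \<le> A * (real n * (\<rho> ^ k) ^ n)) sequentially"
    unfolding eventually_sequentially by blast
  moreover have "(\<lambda>n. A * (real n * (\<rho> ^ k) ^ n)) \<longlonglongrightarrow> 0"
    using tendsto_mult_left[OF powser_times_n_limit_0, of "\<rho> ^ k" A] assms(1-3)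
    by (simp add: power_less_one_iff)
  ultimately show ?thesis
    by (rule Lim_null_comparison)
qed

lemma limsup_less_obtains_real:
  fixes f :: "nat \<Rightarrow> real"
  assumes "limsup (\<lambda>n. ereal (f n)) < ereal c" "b < c"
  obtains r where "b < r" "r < c" "eventually (\<lambda>n. f n < r) sequentially"
proof -
  obtain L where L: "max (limsup (\<lambda>n. ereal (f n))) (ereal b) < L" "L < ereal c"
    using dense assms by (metis less_ereal.simps(1) max_less_iff_conj)
  then obtain r where "L = ereal r"
    by (cases L) auto
  moreover have "eventually (\<lambda>n. ereal (f n) < L) sequentially"
    using L by (intro Limsup_lessD) simp
  ultimately show ?thesis
    using that L by auto
qed

theorem theorem1:
  fixes X :: "(real ^ 'd) set" and N :: "real ^ 'd \<Rightarrow> real" and x :: "nat \<Rightarrow> real ^ 'd"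
  assumes "compact X" and "emeasure lborel X > 0"
    and "is_norm N"
    and "inj x" and "range x \<subseteq> X"
  shows "limsup (\<lambda>n. ereal (mesh_ratio N X (x ` {..<n}))) \<ge> 2
       \<and> (SUP n\<in>{2..}. ereal (mesh_ratio N X (x ` {..<n}))) \<ge> 2"
proof -
  let ?MR = "\<lambda>n. mesh_ratio N X (x ` {..<n})"
  have "bounded X"
    using assms(1) by (rule compact_imp_bounded)
  have "limsup (\<lambda>n. ereal (?MR n)) \<ge> 2"
  proof (rule ccontr)
    assume "\<not> ?thesis"
    then have "limsup (\<lambda>n. ereal (?MR n)) < ereal 2"
      by simp
    then obtain r where "1 < r" "r < 2" and "eventually (\<lambda>n. ?MR n < r) sequentially"
      by (rule limsup_less_obtains_real[where b = 1]) auto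
    then have "(\<lambda>n. real n * fill_dist N X (x ` {..<n}) ^ DIM(real ^ 'd)) \<longlonglongrightarrow> 0"
      using assms(3-5) \<open>bounded X\<close>
      by (intro geometric_decay_times_power_tendsto_0[where \<rho> = "r / 2"]
          fill_dist_decay_if_mesh_ratio_less) auto
    then show False
      using emeasure_not_fill_dist_times_power_tendsto_0[OF assms(3) \<open>bounded X\<close> assms(2,5)] by blast
  qed
  moreover have "limsup (\<lambda>n. ereal (?MR n)) \<le> (SUP n\<in>{2..}. ereal (?MR n))"
    unfolding limsup_INF_SUP by (rule INF_lower) simp
  ultimately show ?thesis
    by simp
qed

end
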